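(* Let $a,b,c\in\mathbb{Z}$ with $a,b$ odd, $c\equiv2\pmod4$, and $ab(a+b)c$ a nonzero perfect square. If the equation $ax^2+by^2=cz^2$ is partition regular with respect to $x,y$, then $ab\equiv1\pmod 8$.
   Context: The equation $ax^2+by^2=cz^2$ is partition regular with respect to $x,y$ if for every finite coloring of $\mathbb{N}=\{1,2,\dots\}$ there exist distinct $x,y\in\mathbb{N}$ of the same color and $z\in\mathbb{N}$ with $ax^2+by^2=cz^2$. A perfect square is $k^2$, $k\in\mathbb{Z}$. *)

theory Defs
  imports Main
begin

definition partition_regular_xy :: "int \<Rightarrow> int \<Rightarrow> int \<Rightarrow> bool" where
  "partition_regular_xy a b c \<longleftrightarrow>
     (\<forall>(r::nat) (col::nat \<Rightarrow> nat). (\<forall>n. n > 0 \<longrightarrow> col n < r) \<longrightarrow>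
        (\<exists>x y z::nat. x > 0 \<and> y > 0 \<and> z > 0 \<and> x \<noteq> y \<and> col x = col y \<and>
           a * (int x)^2 + b * (int y)^2 = c * (int z)^2))"

definition perfect_square :: "int \<Rightarrow> bool" where
  "perfect_square n \<longleftrightarrow> (\<exists>k::int. n = k^2)"

end

theory Submission
  imports Defs "HOL-Computational_Algebra.Primes"
begin

text \<open>
  Every nonzero integer is uniquely \<open>2^n s\<close> with \<open>s\<close> odd, and odd squares are \<open>1 mod 8\<close>; so
  \<open>2^n s = 2^p c z^2\<close> with \<open>s, c\<close> odd forces \<open>n \<equiv> p (mod 2)\<close> and \<open>s \<equiv> c (mod 8)\<close>.
  Write \<open>a + b = 2^E u\<close> and \<open>c = 2c'\<close> with \<open>u, c'\<close> odd; the square hypothesis gives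
  \<open>abuc' \<equiv> 1 (mod 8)\<close>. Colour \<open>2^i X\<close> (\<open>X\<close> odd) by \<open>X mod 2^(E+3)\<close>. For a monochromatic
  solution \<open>x = 2^i X, y = 2^j Y\<close> the valuations force \<open>i = j\<close>, and then
  \<open>aX^2 + bY^2 = 2^E s\<close> with \<open>s \<equiv> u (mod 8)\<close> because \<open>X \<equiv> Y (mod 2^(E+3))\<close>.
  Comparing with \<open>2c'z^2\<close> gives \<open>u \<equiv> c' (mod 8)\<close>, hence \<open>ab \<equiv> abuc' \<equiv> 1 (mod 8)\<close>.
\<close>

lemma odd_square_mod_8:
  fixes x :: int
  assumes "odd x"
  shows "x\<^sup>2 mod 8 = 1"
proof -
  obtain k where "x = 2 * k + 1" using assms oddE by blast
  moreover obtain m where "k * (k + 1) = 2 * m" by (metis dvd_def even_mult_iff odd_add odd_one)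
  ultimately have "x\<^sup>2 = 8 * m + 1" by (simp add: power2_eq_square algebra_simps)
  then show ?thesis by simp
qed

lemma mult_odd_square_mod_8:
  fixes x c :: int
  assumes "odd c"
  shows "(x * c\<^sup>2) mod 8 = x mod 8"
  by (metis assms mod_mult_right_eq mult.right_neutral odd_square_mod_8)

lemma mult_congruent_odd_pair_mod_8:
  fixes x u c :: int
  assumes "odd c" "u mod 8 = c mod 8"
  shows "(x * u * c) mod 8 = x mod 8"
proof -
  have "(x * u * c) mod 8 = (x * c * (u mod 8)) mod 8"
    by (metis mod_mult_right_eq mult.assoc mult.commute)
  also have "\<dots> = (x * c\<^sup>2) mod 8"
    using assms(2) by (metis mod_mult_right_eq mult.assoc power2_eq_square)
  finally show ?thesis using mult_odd_square_mod_8[OF assms(1)] by simp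
qed

lemma multiplicity_two_pow_times_odd:
  fixes s :: int
  assumes "odd s"
  shows "multiplicity 2 (2 ^ n * s) = n"
proof -
  have "prime_elem (2::int)" by simp
  moreover have "s \<noteq> 0" using assms by auto
  ultimately show ?thesis
    using assms by (simp add: prime_elem_multiplicity_mult_distrib multiplicity_eq_zero_iff)
qed

lemma pow2_times_odd_eq_iff:
  fixes s t :: int
  assumes "odd s" "odd t"
  shows "2 ^ n * s = 2 ^ m * t \<longleftrightarrow> n = m \<and> s = t"
  using multiplicity_two_pow_times_odd[OF assms(1), of n]
    multiplicity_two_pow_times_odd[OF assms(2), of m] by auto

lemma pow2_times_odd_decomposition:
  fixes x :: int
  assumes "x \<noteq> 0"
  obtains n s where "x = 2 ^ n * s" "odd s"
  by (rule multiplicity_decompose'[OF assms, of 2]) (auto intro: that)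

lemma pow2_times_odd_eq_square_multiple:
  fixes s c z :: int
  assumes "odd s" "odd c" "2 ^ n * s = 2 ^ p * c * z\<^sup>2"
  shows "p \<le> n \<and> even (n - p) \<and> s mod 8 = c mod 8"
proof -
  have "z \<noteq> 0" using assms by auto
  then obtain k w where z: "z = 2 ^ k * w" and "odd w" by (rule pow2_times_odd_decomposition)
  have "2 ^ p * c * z\<^sup>2 = 2 ^ (p + 2 * k) * (c * w\<^sup>2)"
    unfolding z by (simp add: power_add power_mult algebra_simps)
  with assms \<open>odd w\<close> have "n = p + 2 * k" and "s = c * w\<^sup>2"
    using pow2_times_odd_eq_iff by auto
  then show ?thesis using mult_odd_square_mod_8[OF \<open>odd w\<close>] by simp
qed

lemma pow2_times_odd_eq_square:
  fixes s k :: int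
  assumes "odd s" "2 ^ n * s = k\<^sup>2"
  shows "even n \<and> s mod 8 = 1"
  using pow2_times_odd_eq_square_multiple[of s 1 n 0 k] assms by simp

lemma equal_levels_of_odd_solution:
  fixes a b c X Y z :: int
  assumes "odd a" "odd b" "odd c" "odd X" "odd Y"
    and "a * (2 ^ i * X)\<^sup>2 + b * (2 ^ j * Y)\<^sup>2 = 2 * c * z\<^sup>2"
  shows "i = j"
proof -
  have lower_level_impossible: False
    if "odd a" "odd b" "odd X" "odd Y" "i < j"
      and eq: "a * (2 ^ i * X)\<^sup>2 + b * (2 ^ j * Y)\<^sup>2 = 2 * c * z\<^sup>2"
    for a b X Y :: int and i j :: nat
  proof -
    obtain d where j: "j = i + Suc d" using \<open>i < j\<close> less_iff_Suc_add by auto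
    define s where "s = a * X\<^sup>2 + b * (2 ^ Suc d * Y)\<^sup>2"
    have "odd s" unfolding s_def using that by simp
    have "2 ^ j * Y = 2 ^ i * (2 ^ Suc d * Y)" unfolding j by (simp add: power_add)
    have "2 ^ (2 * i) * s = a * (2 ^ i * X)\<^sup>2 + b * (2 ^ i * (2 ^ Suc d * Y))\<^sup>2"
      unfolding s_def by (simp add: power_mult algebra_simps)
    also have "\<dots> = 2 ^ 1 * c * z\<^sup>2"
      using eq \<open>2 ^ j * Y = 2 ^ i * (2 ^ Suc d * Y)\<close> by simp
    finally have "2 ^ (2 * i) * s = 2 ^ 1 * c * z\<^sup>2" .
    from pow2_times_odd_eq_square_multiple[OF \<open>odd s\<close> \<open>odd c\<close> this] show False by auto
  qed
  show "i = j"
  proof (rule linorder_cases)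
    assume "i < j" then show ?thesis using lower_level_impossible assms by blast
  next
    assume "j < i" then show ?thesis
      using lower_level_impossible[of b a Y X j i] assms by (simp add: add.commute)
  qed
qed

lemma sum_of_congruent_odd_squares:
  fixes a b u X Y :: int
  assumes "odd u" "odd X" "a + b = 2 ^ E * u" "2 ^ (E + 3) dvd X - Y"
  obtains s where "a * X\<^sup>2 + b * Y\<^sup>2 = 2 ^ E * s" "odd s" "s mod 8 = u mod 8"
proof -
  define F :: int where "F = 2 ^ E"
  have "2 ^ (E + 3) = 8 * F" unfolding F_def by (simp add: power_add)
  with assms(4) obtain t where "X - Y = 8 * F * t" by (metis dvdE)
  then have Y: "Y = X - 8 * F * t" by simp
  define W where "W = 2 * b * (4 * F * t\<^sup>2 - X * t)"
  define s where "s = u * X\<^sup>2 + 8 * W"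
  have "a * X\<^sup>2 + b * Y\<^sup>2 = (a + b) * X\<^sup>2 + 16 * F * b * (4 * F * t\<^sup>2 - X * t)"
    unfolding Y by (simp add: power2_eq_square algebra_simps)
  also have "\<dots> = F * s"
    unfolding assms(3) F_def[symmetric] s_def W_def by (simp add: algebra_simps)
  finally have "a * X\<^sup>2 + b * Y\<^sup>2 = 2 ^ E * s" unfolding F_def .
  moreover have "odd s" unfolding s_def using assms by simp
  moreover have "s mod 8 = u mod 8"
    unfolding s_def using mult_odd_square_mod_8[OF \<open>odd X\<close>] by (simp add: mod_add_left_eq)
  ultimately show thesis by (rule that)
qed

definition odd_part :: "nat \<Rightarrow> nat" where
  "odd_part n = n div 2 ^ multiplicity 2 n"

lemma odd_part_decomposition: "n = 2 ^ multiplicity 2 n * odd_part n"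
  unfolding odd_part_def by (simp add: multiplicity_dvd)

lemma odd_odd_part: "n \<noteq> 0 \<Longrightarrow> odd (odd_part n)"
  unfolding odd_part_def using multiplicity_decompose[of n 2] by simp

lemma partition_regular_xy_congruent_odd_parts:
  assumes "partition_regular_xy a b c"
  obtains i j :: nat and X Y z :: int
  where "odd X" "odd Y" "2 ^ M dvd X - Y" "a * (2 ^ i * X)\<^sup>2 + b * (2 ^ j * Y)\<^sup>2 = c * z\<^sup>2"
proof -
  define col where "col n = odd_part n mod 2 ^ M" for n
  have "\<forall>n. n > 0 \<longrightarrow> col n < 2 ^ M" unfolding col_def by simp
  with assms obtain x y z :: nat where "x > 0" "y > 0" "col x = col y"
    and eq: "a * (int x)\<^sup>2 + b * (int y)\<^sup>2 = c * (int z)\<^sup>2"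
    unfolding partition_regular_xy_def by blast
  define X Y where "X = int (odd_part x)" and "Y = int (odd_part y)"
  have "X mod 2 ^ M = Y mod 2 ^ M"
    using \<open>col x = col y\<close> unfolding col_def X_def Y_def
    by (metis of_nat_mod of_nat_numeral of_nat_power)
  then have "2 ^ M dvd X - Y" by (simp add: mod_eq_dvd_iff)
  moreover have "odd X" "odd Y"
    unfolding X_def Y_def using \<open>x > 0\<close> \<open>y > 0\<close> odd_odd_part by auto
  moreover have "int x = 2 ^ multiplicity 2 x * X" "int y = 2 ^ multiplicity 2 y * Y"
    unfolding X_def Y_def by (metis odd_part_decomposition of_nat_mult of_nat_numeral of_nat_power)+
  ultimately show thesis using that eq by simp
qed

theorem propositionP:
  fixes a b c :: int
  assumes "odd a" and "odd b" and "c mod 4 = 2"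
    and "a * b * (a + b) * c \<noteq> 0"
    and "perfect_square (a * b * (a + b) * c)"
    and "partition_regular_xy a b c"
  shows "a * b mod 8 = 1"
proof -
  obtain c' where c: "c = 2 * c'" and "odd c'"
  proof
    show "c = 2 * (c div 2)" "odd (c div 2)" using \<open>c mod 4 = 2\<close> by presburger+
  qed
  have "a + b \<noteq> 0" using assms(4) by auto
  then obtain E u where ab: "a + b = 2 ^ E * u" and "odd u" by (rule pow2_times_odd_decomposition)
  obtain k where "a * b * (a + b) * c = k\<^sup>2" using assms(5) unfolding perfect_square_def by blast
  moreover have "a * b * (a + b) * c = 2 ^ (E + 1) * (a * b * u * c')"
    unfolding ab c by (simp add: algebra_simps)
  moreover have "odd (a * b * u * c')" using assms(1,2) \<open>odd u\<close> \<open>odd c'\<close> by simp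
  ultimately have square: "(a * b * u * c') mod 8 = 1" using pow2_times_odd_eq_square by metis
  obtain i j X Y z where "odd X" "odd Y" "2 ^ (E + 3) dvd X - Y"
    and eq: "a * (2 ^ i * X)\<^sup>2 + b * (2 ^ j * Y)\<^sup>2 = 2 * c' * z\<^sup>2"
    using partition_regular_xy_congruent_odd_parts[OF assms(6)] unfolding c by metis
  have "i = j" using equal_levels_of_odd_solution[OF assms(1,2) \<open>odd c'\<close> \<open>odd X\<close> \<open>odd Y\<close> eq] .
  obtain s where s: "a * X\<^sup>2 + b * Y\<^sup>2 = 2 ^ E * s" "odd s" "s mod 8 = u mod 8"
    using sum_of_congruent_odd_squares[OF \<open>odd u\<close> \<open>odd X\<close> ab \<open>2 ^ (E + 3) dvd X - Y\<close>] .
  have "2 ^ (2 * i + E) * s = (2 ^ i)\<^sup>2 * (a * X\<^sup>2 + b * Y\<^sup>2)"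
    unfolding s(1) by (simp add: power_add power_mult algebra_simps)
  also have "\<dots> = 2 ^ 1 * c' * z\<^sup>2" using eq \<open>i = j\<close> by (simp add: power_mult_distrib algebra_simps)
  finally have "s mod 8 = c' mod 8"
    using pow2_times_odd_eq_square_multiple[OF \<open>odd s\<close> \<open>odd c'\<close>] by blast
  with s(3) have "u mod 8 = c' mod 8" by simp
  then show ?thesis using square mult_congruent_odd_pair_mod_8[OF \<open>odd c'\<close>] by metis
qed

end
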